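(* Let $t>0$ be fixed and $x_1,x_2>0$ with $x_1\ne x_2$. Then the characteristic triangles $\Delta(x_1,t)$ and $\Delta(x_2,t)$ do not intersect in the open quadrant $(0,\infty)^2$.
   Context: Standing assumptions: $u_0,u_b:[0,\infty)\to\mathbb{R}$ bounded measurable with $u_b>0$; $\rho_0,\rho_b:[0,\infty)\to(0,\infty)$ positive locally bounded measurable. For $x,t,y,\tau\ge0$: $F(y,x,t)=\int_0^y[tu_0(\eta)+\eta-x]\rho_0(\eta)\,d\eta$, $G(\tau,x,t)=\int_0^\tau[x-u_b(\eta)(t-\eta)]\rho_b(\eta)u_b(\eta)\,d\eta$, $F(x,t)=\min_{y\ge0}F(y,x,t)$, $G(x,t)=\min_{\tau\ge0}G(\tau,x,t)$ (minima attained); $y_*\le y^*$ smallest/largest minimizers of $F(\cdot,x,t)$, $\tau_*\le\tau^*$ those of $G(\cdot,x,t)$. Characteristic triangle $\Delta(x,t)$ ($x\ge0,t>0$): (1) if $x>0$, $F(x,t)<G(x,t)$: convex hull of $(x,t),(y_*(x,t),0),(y^*(x,t),0)$; (2) if $F(x,t)>G(x,t)$: convex hull of $(x,t),(0,\tau_*(x,t)),(0,\tau^*(x,t))$; (3) if $F(x,t)=G(x,t)$: convex hull of $(x,t),(y^*(x,t),0),(0,\tau^*(x,t)),(0,0)$; (4) if $x=0$, $F(0,t)<G(0,t)$: convex hull of $(0,t),(0,0),(y^*(0,t),0)$. *)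

theory Defs
  imports "HOL-Analysis.Analysis"
begin

definition standing_assms ::
  "(real \<Rightarrow> real) \<Rightarrow> (real \<Rightarrow> real) \<Rightarrow> (real \<Rightarrow> real) \<Rightarrow> (real \<Rightarrow> real) \<Rightarrow> bool" where
  "standing_assms u0 ub rho0 rhob \<longleftrightarrow>
     set_borel_measurable borel {0..} u0 \<and> bounded (u0 ` {0..}) \<and>
     set_borel_measurable borel {0..} ub \<and> bounded (ub ` {0..}) \<and> (\<forall>\<eta>\<ge>0. ub \<eta> > 0) \<and>
     set_borel_measurable borel {0..} rho0 \<and> (\<forall>\<eta>\<ge>0. rho0 \<eta> > 0) \<and>
       (\<forall>c\<ge>0. bounded (rho0 ` {0..c})) \<and>
     set_borel_measurable borel {0..} rhob \<and> (\<forall>\<eta>\<ge>0. rhob \<eta> > 0) \<and>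
       (\<forall>c\<ge>0. bounded (rhob ` {0..c}))"

definition Fyxt :: "(real \<Rightarrow> real) \<Rightarrow> (real \<Rightarrow> real) \<Rightarrow> real \<Rightarrow> real \<Rightarrow> real \<Rightarrow> real" where
  "Fyxt u0 rho0 y x t = (LINT \<eta>:{0..y}|lborel. (t * u0 \<eta> + \<eta> - x) * rho0 \<eta>)"

definition Gtxt :: "(real \<Rightarrow> real) \<Rightarrow> (real \<Rightarrow> real) \<Rightarrow> real \<Rightarrow> real \<Rightarrow> real \<Rightarrow> real" where
  "Gtxt ub rhob \<tau> x t = (LINT \<eta>:{0..\<tau>}|lborel. (x - ub \<eta> * (t - \<eta>)) * rhob \<eta> * ub \<eta>)"

text \<open>F(x,t) = min over y \<ge> 0, G(x,t) = min over tau \<ge> 0 (the minima are attained).\<close>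
definition Fmin :: "(real \<Rightarrow> real) \<Rightarrow> (real \<Rightarrow> real) \<Rightarrow> real \<Rightarrow> real \<Rightarrow> real" where
  "Fmin u0 rho0 x t = (INF y\<in>{0..}. Fyxt u0 rho0 y x t)"

definition Gmin :: "(real \<Rightarrow> real) \<Rightarrow> (real \<Rightarrow> real) \<Rightarrow> real \<Rightarrow> real \<Rightarrow> real" where
  "Gmin ub rhob x t = (INF \<tau>\<in>{0..}. Gtxt ub rhob \<tau> x t)"

definition Fargmin :: "(real \<Rightarrow> real) \<Rightarrow> (real \<Rightarrow> real) \<Rightarrow> real \<Rightarrow> real \<Rightarrow> real set" where
  "Fargmin u0 rho0 x t = {y. y \<ge> 0 \<and> Fyxt u0 rho0 y x t = Fmin u0 rho0 x t}"

definition Gargmin :: "(real \<Rightarrow> real) \<Rightarrow> (real \<Rightarrow> real) \<Rightarrow> real \<Rightarrow> real \<Rightarrow> real set" where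
  "Gargmin ub rhob x t = {\<tau>. \<tau> \<ge> 0 \<and> Gtxt ub rhob \<tau> x t = Gmin ub rhob x t}"

definition y_lo where "y_lo u0 rho0 x t = Inf (Fargmin u0 rho0 x t)"
definition y_hi where "y_hi u0 rho0 x t = Sup (Fargmin u0 rho0 x t)"
definition tau_lo where "tau_lo ub rhob x t = Inf (Gargmin ub rhob x t)"
definition tau_hi where "tau_hi ub rhob x t = Sup (Gargmin ub rhob x t)"

text \<open>Characteristic triangle Delta(x,t), points written as (space, time).\<close>
definition char_triangle ::
  "(real \<Rightarrow> real) \<Rightarrow> (real \<Rightarrow> real) \<Rightarrow> (real \<Rightarrow> real) \<Rightarrow> (real \<Rightarrow> real) \<Rightarrow> real \<Rightarrow> real \<Rightarrow> (real \<times> real) set" where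
  "char_triangle u0 ub rho0 rhob x t =
     (let F = Fmin u0 rho0 x t; G = Gmin ub rhob x t in
      if x > 0 \<and> F < G then
        convex hull {(x, t), (y_lo u0 rho0 x t, 0), (y_hi u0 rho0 x t, 0)}
      else if F > G then
        convex hull {(x, t), (0, tau_lo ub rhob x t), (0, tau_hi ub rhob x t)}
      else if F = G then
        convex hull {(x, t), (y_hi u0 rho0 x t, 0), (0, tau_hi ub rhob x t), (0, 0)}
      else
        convex hull {(0, t), (0, 0), (y_hi u0 rho0 x t, 0)})"

end

theory Submission
  imports Defs
begin

text \<open>
  Let \<open>x\<^sub>1 < x\<^sub>2\<close>. Since \<open>F(y, x\<^sub>2, t) = F(y, x\<^sub>1, t) - (x\<^sub>2 - x\<^sub>1) \<integral>\<^sub>0\<^sup>y \<rho>\<^sub>0\<close> and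
  \<open>G(\<tau>, x\<^sub>2, t) = G(\<tau>, x\<^sub>1, t) + (x\<^sub>2 - x\<^sub>1) \<integral>\<^sub>0\<^sup>\<tau> \<rho>\<^sub>b u\<^sub>b\<close> with strictly increasing
  integrals, the minimisers \<open>y\<close> of \<open>F\<close> move right and the minimisers \<open>\<tau>\<close> of \<open>G\<close> move down
  as \<open>x\<close> grows, and \<open>F - G\<close> decreases, strictly unless the minimisers involved are \<open>0\<close>.
  Walking along the boundary of the quadrant from the top of the \<open>t\<close>-axis through the origin
  to the right along the \<open>x\<close>-axis, all base vertices of \<open>\<Delta>(x\<^sub>1, t)\<close> therefore come
  before some boundary point \<open>P\<close> below height \<open>t\<close> and all those of \<open>\<Delta>(x\<^sub>2, t)\<close> after it. The
  line through \<open>P\<close> and \<open>((x\<^sub>1 + x\<^sub>2)/2, t)\<close> then separates the two triangles, so they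
  can only meet in \<open>P\<close>, which is not in the open quadrant.
\<close>

section \<open>Locally bounded measurable functions on the half-line\<close>

definition locally_bounded_measurable :: "(real \<Rightarrow> real) \<Rightarrow> bool" where
  "locally_bounded_measurable g \<longleftrightarrow>
     g \<in> borel_measurable (restrict_space borel {0..}) \<and> (\<forall>c. bounded (g ` {0..c}))"

lemma bounded_mult_comp:
  fixes f g :: "'a \<Rightarrow> 'b::real_normed_algebra"
  assumes "bounded (f ` S)" "bounded (g ` S)"
  shows "bounded ((\<lambda>x. f x * g x) ` S)"
proof -
  obtain B C where "\<And>x. x \<in> S \<Longrightarrow> norm (f x) \<le> B" "\<And>x. x \<in> S \<Longrightarrow> norm (g x) \<le> C"
    using assms by (auto simp: bounded_iff)
  then have "norm (f x * g x) \<le> B * C" if "x \<in> S" for x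
    using that by (meson norm_ge_zero norm_mult_ineq mult_mono order_trans)
  then show ?thesis
    by (auto simp: bounded_iff)
qed

lemma locally_bounded_measurable_const: "locally_bounded_measurable (\<lambda>x. c)"
  unfolding locally_bounded_measurable_def by (auto intro: bounded_subset[of "{c}"])

lemma locally_bounded_measurable_ident: "locally_bounded_measurable (\<lambda>x. x)"
  by (simp add: locally_bounded_measurable_def measurable_restrict_space1)

lemma locally_bounded_measurable_add:
  "locally_bounded_measurable f \<Longrightarrow> locally_bounded_measurable g \<Longrightarrow>
    locally_bounded_measurable (\<lambda>x. f x + g x)"
  by (simp add: locally_bounded_measurable_def borel_measurable_add bounded_plus_comp)

lemma locally_bounded_measurable_diff:
  "locally_bounded_measurable f \<Longrightarrow> locally_bounded_measurable g \<Longrightarrow>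
    locally_bounded_measurable (\<lambda>x. f x - g x)"
  by (simp add: locally_bounded_measurable_def borel_measurable_diff bounded_minus_comp)

lemma locally_bounded_measurable_mult:
  "locally_bounded_measurable f \<Longrightarrow> locally_bounded_measurable g \<Longrightarrow>
    locally_bounded_measurable (\<lambda>x. f x * g x)"
  by (simp add: locally_bounded_measurable_def borel_measurable_times bounded_mult_comp)

lemma locally_bounded_measurable_set_integrable:
  assumes g: "locally_bounded_measurable g" and A: "A \<in> sets borel" "A \<subseteq> {0..c}"
  shows "set_integrable lborel A g"
proof -
  have "bounded (g ` {0..c})"
    using g by (simp add: locally_bounded_measurable_def)
  then obtain B where B: "\<And>x. x \<in> {0..c} \<Longrightarrow> norm (g x) \<le> B"
    unfolding bounded_iff by blast
  have "set_integrable lborel {0..c} (\<lambda>x. B)"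
    by (rule borel_integrable_atLeastAtMost') simp
  then have bound_integrable: "set_integrable lborel A (\<lambda>x. B)"
    by (rule set_integrable_subset) (use A in auto)
  have "g \<in> borel_measurable (restrict_space borel {0..})"
    using g by (simp add: locally_bounded_measurable_def)
  then have "(\<lambda>x. indicator {0..} x *\<^sub>R g x) \<in> borel_measurable borel"
    by (subst (asm) borel_measurable_restrict_space_iff) auto
  then have "(\<lambda>x. indicator A x * (indicator {0..} x *\<^sub>R g x)) \<in> borel_measurable borel"
    using A by (intro borel_measurable_times) auto
  moreover have "(\<lambda>x. indicator A x *\<^sub>R g x) = (\<lambda>x. indicator A x * (indicator {0..} x *\<^sub>R g x))"
    using A by (intro ext) (auto split: split_indicator)
  ultimately have "set_borel_measurable lborel A g"
    unfolding set_borel_measurable_def by simp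
  moreover have "AE x in lborel. x \<in> A \<longrightarrow> norm (g x) \<le> norm B"
  proof (intro AE_I2 impI)
    fix x assume "x \<in> A"
    with A(2) have "x \<in> {0..c}"
      by blast
    then have "norm (g x) \<le> B"
      by (rule B)
    then show "norm (g x) \<le> norm B"
      by (metis abs_ge_self order_trans real_norm_def)
  qed
  ultimately show ?thesis
    using set_integrable_bound[OF bound_integrable] by blast
qed

lemma locally_bounded_measurable_set_integrable_Icc:
  "locally_bounded_measurable g \<Longrightarrow> set_integrable lborel {0..y} g"
  by (rule locally_bounded_measurable_set_integrable) auto

lemma set_integral_Icc_split:
  assumes "locally_bounded_measurable g" "0 \<le> a" "a \<le> b"
  shows "(LINT x:{0..b}|lborel. g x) = (LINT x:{0..a}|lborel. g x) + (LINT x:{a<..b}|lborel. g x)"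
proof -
  have "{0..b} = {0..a} \<union> {a<..b}"
    using assms by auto
  moreover have "(LINT x:{0..a} \<union> {a<..b}|lborel. g x) = (LINT x:{0..a}|lborel. g x) + (LINT x:{a<..b}|lborel. g x)"
    using assms by (intro set_integral_Un locally_bounded_measurable_set_integrable[where c = b]) auto
  ultimately show ?thesis
    by simp
qed

lemma set_integral_nonneg:
  fixes g :: "'a \<Rightarrow> real"
  assumes "\<And>x. x \<in> A \<Longrightarrow> 0 \<le> g x"
  shows "0 \<le> (LINT x:A|M. g x)"
  unfolding set_lebesgue_integral_def
  using assms by (intro integral_nonneg_AE) (auto simp: indicator_def)

lemma set_integral_Ioc_pos:
  assumes g: "locally_bounded_measurable g" and "0 \<le> a" "a < b"
    and pos: "\<And>x. a < x \<Longrightarrow> x \<le> b \<Longrightarrow> 0 < g x"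
  shows "0 < (LINT x:{a<..b}|lborel. g x)"
proof -
  let ?f = "\<lambda>x. indicator {a<..b} x *\<^sub>R g x"
  have "set_integrable lborel {a<..b} g"
    using assms by (intro locally_bounded_measurable_set_integrable[where c = b]) auto
  then have int: "integrable lborel ?f"
    by (simp add: set_integrable_def)
  have nonneg: "0 \<le> ?f x" for x
    using pos by (auto simp: indicator_def less_imp_le)
  have "integral\<^sup>L lborel ?f \<noteq> 0"
  proof
    assume "integral\<^sup>L lborel ?f = 0"
    then have "AE x in lborel. ?f x = 0"
      using integral_nonneg_eq_0_iff_AE[OF int] nonneg by auto
    then have "AE x in lborel. x \<notin> {a<..b}"
      by eventually_elim (use pos in \<open>fastforce simp: indicator_def split: if_splits\<close>)
    then have "emeasure lborel {a<..b} = 0"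
      by (subst (asm) AE_iff_measurable[of "{a<..b}"]) auto
    with \<open>a < b\<close> show False
      by simp
  qed
  moreover have "0 \<le> integral\<^sup>L lborel ?f"
    using nonneg by (intro integral_nonneg_AE) auto
  ultimately show ?thesis
    unfolding set_lebesgue_integral_def by linarith
qed

lemma set_integral_Icc_strict_mono:
  assumes g: "locally_bounded_measurable g" and "0 \<le> a" "a < b"
    and pos: "\<And>x. a < x \<Longrightarrow> x \<le> b \<Longrightarrow> 0 < g x"
  shows "(LINT x:{0..a}|lborel. g x) < (LINT x:{0..b}|lborel. g x)"
  using set_integral_Icc_split[OF g \<open>0 \<le> a\<close> less_imp_le[OF \<open>a < b\<close>]] set_integral_Ioc_pos[OF assms]
  by linarith

lemma continuous_on_set_integral_Icc:
  assumes g: "locally_bounded_measurable g"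
  shows "continuous_on {0..K} (\<lambda>y. LINT x:{0..y}|lborel. g x)"
proof -
  note int = locally_bounded_measurable_set_integrable_Icc[OF g]
  have "continuous_on {0..K} (\<lambda>y. integral {0..y} g)"
    using set_borel_integral_eq_integral(1)[OF int] by (rule indefinite_integral_continuous_1)
  then show ?thesis
    by (simp add: set_borel_integral_eq_integral(2)[OF int])
qed

lemma strict_mono_on_set_integral_Icc:
  assumes g: "locally_bounded_measurable g" and pos: "\<And>x. 0 \<le> x \<Longrightarrow> 0 < g x"
  shows "strict_mono_on {0..} (\<lambda>y. LINT x:{0..y}|lborel. g x)"
  using assms by (intro strict_mono_onI set_integral_Icc_strict_mono) auto

lemma set_integral_Icc_pos:
  assumes g: "locally_bounded_measurable g" and pos: "\<And>x. 0 \<le> x \<Longrightarrow> 0 < g x" and "0 < y"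
  shows "0 < (LINT x:{0..y}|lborel. g x)"
proof -
  have "0 \<le> (LINT x:{0..0}|lborel. g x)"
    using pos by (intro set_integral_nonneg) (auto intro: less_imp_le)
  also have "\<dots> < (LINT x:{0..y}|lborel. g x)"
    using assms by (intro set_integral_Icc_strict_mono) auto
  finally show ?thesis .
qed

section \<open>Minimisers on the half-line\<close>

lemma Sup_Inf_bounds:
  fixes S :: "real set"
  assumes "S \<noteq> {}" "S \<subseteq> {0..K}"
  shows "0 \<le> Inf S" "Inf S \<le> Sup S" "Sup S \<le> K"
proof -
  have "bdd_below S"
    using assms(2) by (intro bdd_belowI[of _ 0]) auto
  moreover have "bdd_above S"
    using assms(2) by (intro bdd_aboveI[of _ K]) auto
  ultimately show "Inf S \<le> Sup S"
    using assms(1) by (intro cInf_le_cSup)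
  show "0 \<le> Inf S"
    using assms by (intro cInf_greatest) auto
  show "Sup S \<le> K"
    using assms by (intro cSup_least) auto
qed

lemma halfline_INF_attained:
  fixes h :: "real \<Rightarrow> real"
  assumes cont: "continuous_on {0..K} h" and "0 \<le> K" and grow: "\<And>y. K < y \<Longrightarrow> h K < h y"
  shows "{y. 0 \<le> y \<and> h y = (INF z\<in>{0..}. h z)} \<noteq> {}"
    and "{y. 0 \<le> y \<and> h y = (INF z\<in>{0..}. h z)} \<subseteq> {0..K}"
    and "\<And>z. 0 \<le> z \<Longrightarrow> (INF z\<in>{0..}. h z) \<le> h z"
proof -
  obtain y0 where y0: "y0 \<in> {0..K}" "\<And>y. y \<in> {0..K} \<Longrightarrow> h y0 \<le> h y"
    using continuous_attains_inf[OF compact_Icc _ cont] \<open>0 \<le> K\<close> by auto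
  have "h y0 \<le> h K"
    using y0(2) \<open>0 \<le> K\<close> by simp
  then have beyond_K: "h y0 < h y" if "K < y" for y
    using grow[OF that] by linarith
  have min: "h y0 \<le> h y" if "0 \<le> y" for y
  proof (cases "y \<le> K")
    case True
    with y0(2) that show ?thesis by simp
  next
    case False
    with beyond_K[of y] show ?thesis by simp
  qed
  have INF_eq: "(INF z\<in>{0..}. h z) = h y0"
  proof (rule antisym)
    show "(INF z\<in>{0..}. h z) \<le> h y0"
      using y0(1) min by (intro cINF_lower bdd_belowI2) auto
    show "h y0 \<le> (INF z\<in>{0..}. h z)"
      using min by (intro cINF_greatest) auto
  qed
  show "{y. 0 \<le> y \<and> h y = (INF z\<in>{0..}. h z)} \<noteq> {}"
    using INF_eq y0(1) by auto
  show "{y. 0 \<le> y \<and> h y = (INF z\<in>{0..}. h z)} \<subseteq> {0..K}"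
    using INF_eq beyond_K by (force simp: not_less[symmetric])
  show "\<And>z. 0 \<le> z \<Longrightarrow> (INF z\<in>{0..}. h z) \<le> h z"
    using INF_eq min by simp
qed

lemma set_integral_Icc_INF_attained:
  assumes g: "locally_bounded_measurable g" and "0 \<le> K" and pos: "\<And>x. K < x \<Longrightarrow> 0 < g x"
  shows "{y. 0 \<le> y \<and> (LINT x:{0..y}|lborel. g x) = (INF z\<in>{0..}. LINT x:{0..z}|lborel. g x)} \<noteq> {}"
    and "{y. 0 \<le> y \<and> (LINT x:{0..y}|lborel. g x) = (INF z\<in>{0..}. LINT x:{0..z}|lborel. g x)} \<subseteq> {0..K}"
    and "\<And>y. 0 \<le> y \<Longrightarrow> (INF z\<in>{0..}. LINT x:{0..z}|lborel. g x) \<le> (LINT x:{0..y}|lborel. g x)"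
proof -
  have "(LINT x:{0..K}|lborel. g x) < (LINT x:{0..y}|lborel. g x)" if "K < y" for y
    using that pos \<open>0 \<le> K\<close> by (intro set_integral_Icc_strict_mono[OF g]) auto
  note attained = halfline_INF_attained[OF continuous_on_set_integral_Icc[OF g] \<open>0 \<le> K\<close> this]
  show "{y. 0 \<le> y \<and> (LINT x:{0..y}|lborel. g x) = (INF z\<in>{0..}. LINT x:{0..z}|lborel. g x)} \<noteq> {}"
    using attained(1) by simp
  show "{y. 0 \<le> y \<and> (LINT x:{0..y}|lborel. g x) = (INF z\<in>{0..}. LINT x:{0..z}|lborel. g x)} \<subseteq> {0..K}"
    using attained(2) by simp
  show "\<And>y. 0 \<le> y \<Longrightarrow> (INF z\<in>{0..}. LINT x:{0..z}|lborel. g x) \<le> (LINT x:{0..y}|lborel. g x)"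
    using attained(3) by simp
qed

lemma minimiser_mono:
  fixes hA hB M :: "real \<Rightarrow> real"
  assumes shift: "\<And>y. 0 \<le> y \<Longrightarrow> hB y = hA y - c * M y" and "0 < c"
    and M: "strict_mono_on {0..} M"
    and "0 \<le> yA" "\<And>z. 0 \<le> z \<Longrightarrow> hA yA \<le> hA z"
    and "0 \<le> yB" "\<And>z. 0 \<le> z \<Longrightarrow> hB yB \<le> hB z"
  shows "yA \<le> yB"
proof (rule ccontr)
  assume "\<not> yA \<le> yB"
  then have "c * M yB < c * M yA"
    using M \<open>0 < c\<close> \<open>0 \<le> yB\<close> by (simp add: strict_mono_on_def)
  moreover have "hA yA \<le> hA yB" "hB yB \<le> hB yA"
    using assms by auto
  ultimately show False
    using shift[of yA] shift[of yB] \<open>0 \<le> yA\<close> \<open>0 \<le> yB\<close> by linarith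
qed

section \<open>Convex hulls separated by a line\<close>

lemma convex_insert_open_halfspace:
  fixes w p :: "'a::real_inner"
  shows "convex (insert p {z. inner w p < inner w z})"
  unfolding convex_alt
proof (intro ballI allI impI)
  fix x y :: 'a and u :: real
  assume x: "x \<in> insert p {z. inner w p < inner w z}" and y: "y \<in> insert p {z. inner w p < inner w z}"
    and u: "0 \<le> u \<and> u \<le> 1"
  have combination: "inner w ((1 - u) *\<^sub>R x + u *\<^sub>R y) - inner w p
      = (1 - u) * (inner w x - inner w p) + u * (inner w y - inner w p)"
    by (simp add: inner_add_right algebra_simps)
  show "(1 - u) *\<^sub>R x + u *\<^sub>R y \<in> insert p {z. inner w p < inner w z}"
  proof (cases "x = p \<and> y = p \<or> u = 0 \<or> u = 1")
    case True
    with x y show ?thesis by (auto simp flip: scaleR_add_left)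
  next
    case False
    with u have "0 < 1 - u" "0 < u" by auto
    moreover from x y have "0 \<le> inner w x - inner w p" "0 \<le> inner w y - inner w p"
      by auto
    moreover from x y False have "0 < inner w x - inner w p \<or> 0 < inner w y - inner w p"
      by auto
    ultimately have "0 < (1 - u) * (inner w x - inner w p) + u * (inner w y - inner w p)"
      by (auto intro: add_pos_nonneg add_nonneg_pos)
    with combination show ?thesis by simp
  qed
qed

lemma convex_hull_Int_subset_separating_point:
  fixes w p :: "'a::real_inner"
  assumes "A \<subseteq> insert p {z. inner w z < inner w p}" and "B \<subseteq> insert p {z. inner w p < inner w z}"
  shows "convex hull A \<inter> convex hull B \<subseteq> {p}"
proof -
  have "convex hull A \<subseteq> insert p {z. inner (- w) p < inner (- w) z}"
    using assms(1) by (intro hull_minimal convex_insert_open_halfspace) auto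
  moreover have "convex hull B \<subseteq> insert p {z. inner w p < inner w z}"
    using assms(2) by (intro hull_minimal convex_insert_open_halfspace)
  ultimately show ?thesis
    by (auto dest: less_asym)
qed

text \<open>Twice the signed area of the triangle \<open>P Q z\<close>: positive iff \<open>z\<close> lies to the left of the
  line from \<open>P\<close> to \<open>Q\<close>.\<close>

definition line_side :: "real \<times> real \<Rightarrow> real \<times> real \<Rightarrow> real \<times> real \<Rightarrow> real" where
  "line_side P Q z = (fst Q - fst P) * (snd z - snd P) - (snd Q - snd P) * (fst z - fst P)"

lemma line_side_eq_inner:
  "line_side P Q z = inner (snd P - snd Q, fst Q - fst P) z - inner (snd P - snd Q, fst Q - fst P) P"
  by (simp add: line_side_def inner_prod_def algebra_simps)

lemma convex_hulls_separated_by_line: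
  assumes "A \<subseteq> insert P {z. 0 < line_side P Q z}" and "B \<subseteq> insert P {z. line_side P Q z < 0}"
  shows "convex hull A \<inter> convex hull B \<subseteq> {P}"
  using convex_hull_Int_subset_separating_point[of B P "(snd P - snd Q, fst Q - fst P)" A] assms
  by (auto simp: line_side_eq_inner)

definition quadrant_boundary :: "(real \<times> real) set" where
  "quadrant_boundary = {0..} \<times> {0} \<union> {0} \<times> {0..}"

lemma line_side_x_axis_point_y_axis:
  assumes "0 \<le> p" "0 < m" "0 < t" "0 \<le> b" "b \<le> t"
  shows "(0, b) = (p, 0) \<or> 0 < line_side (p, 0) (m, t) (0, b)"
proof -
  have "line_side (p, 0) (m, t) (0, b) = (m - p) * b + t * p"
    by (simp add: line_side_def algebra_simps)
  moreover have "(0, b) = (p, 0) \<or> 0 < (m - p) * b + t * p"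
  proof (cases "p \<le> m")
    case True
    then show ?thesis
      using assms by (cases "p = 0") (auto intro: add_nonneg_pos simp: zero_less_mult_iff)
  next
    case False
    then have "(m - p) * t \<le> (m - p) * b"
      using assms by (intro mult_left_mono_neg) auto
    then have "m * t \<le> (m - p) * b + t * p"
      by (simp add: algebra_simps)
    moreover have "0 < m * t"
      using assms by simp
    ultimately show ?thesis
      by linarith
  qed
  ultimately show ?thesis
    by simp
qed

text \<open>On \<open>quadrant_boundary\<close> the coordinate \<open>fst z - snd z\<close> runs from \<open>-\<infinity>\<close> at the top
  of the vertical axis through \<open>0\<close> at the origin to \<open>+\<infinity>\<close> along the horizontal axis.\<close>

lemma line_side_quadrant_boundary_before:
  assumes P: "(p, q) \<in> quadrant_boundary" "q < t" and "0 < m"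
    and z: "z \<in> quadrant_boundary" "snd z \<le> t" "fst z - snd z \<le> p - q"
  shows "z = (p, q) \<or> 0 < line_side (p, q) (m, t) z"
proof -
  have "0 \<le> p" "0 \<le> q" "p = 0 \<or> q = 0"
    using P by (auto simp: quadrant_boundary_def)
  from z consider a where "z = (a, 0)" "0 \<le> a" "a \<le> p - q"
    | b where "z = (0, b)" "0 \<le> b" "b \<le> t" "- b \<le> p - q"
    by (auto simp: quadrant_boundary_def)
  then show ?thesis
  proof cases
    case (1 a)
    then have "(a, 0) = (p, q) \<or> 0 < (m - p) * (0 - q) - (t - q) * (a - p)"
      using \<open>q < t\<close> \<open>0 \<le> p\<close> \<open>0 \<le> q\<close> \<open>p = 0 \<or> q = 0\<close>
      by (cases "a = p") (auto simp: mult_pos_neg)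
    with 1 show ?thesis
      by (simp add: line_side_def)
  next
    case (2 b)
    show ?thesis
    proof (cases "q = 0")
      case True
      with 2 line_side_x_axis_point_y_axis[of p m t b] \<open>0 \<le> p\<close> \<open>0 < m\<close> \<open>q < t\<close> show ?thesis
        by simp
    next
      case False
      with \<open>p = 0 \<or> q = 0\<close> 2 have "p = 0" "q \<le> b"
        by auto
      with 2 \<open>0 < m\<close> show ?thesis
        by (cases "b = q") (auto simp: line_side_def zero_less_mult_iff)
    qed
  qed
qed

lemma line_side_quadrant_boundary_after:
  assumes P: "(p, q) \<in> quadrant_boundary" "q < t" and "0 < m"
    and z: "z \<in> quadrant_boundary" "p - q \<le> fst z - snd z"
  shows "z = (p, q) \<or> line_side (p, q) (m, t) z < 0"
proof -
  have "0 \<le> p" "0 \<le> q" "p = 0 \<or> q = 0"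
    using P by (auto simp: quadrant_boundary_def)
  from z consider a where "z = (a, 0)" "0 \<le> a" "p - q \<le> a"
    | b where "z = (0, b)" "0 \<le> b" "p - q \<le> - b"
    by (auto simp: quadrant_boundary_def)
  then show ?thesis
  proof cases
    case (1 a)
    have "(a, 0) = (p, q) \<or> (m - p) * (0 - q) - (t - q) * (a - p) < 0"
    proof (cases "q = 0")
      case True
      with 1 \<open>q < t\<close> show ?thesis
        by (cases "a = p") auto
    next
      case False
      with \<open>p = 0 \<or> q = 0\<close> \<open>0 \<le> q\<close> have "p = 0" "0 < q"
        by auto
      moreover have "0 \<le> (t - q) * a" "0 < m * q"
        using 1 \<open>q < t\<close> \<open>0 < m\<close> \<open>0 < q\<close> by simp_all
      ultimately show ?thesis
        by simp
    qed
    with 1 show ?thesis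
      by (simp add: line_side_def)
  next
    case (2 b)
    with \<open>0 \<le> p\<close> \<open>0 \<le> q\<close> \<open>p = 0 \<or> q = 0\<close> have "p = 0" "b \<le> q"
      by auto
    with 2 \<open>0 < m\<close> have "(0, b) = (p, q) \<or> (m - p) * (b - q) - (t - q) * (0 - p) < 0"
      by (cases "b = q") (auto simp: mult_pos_neg)
    with 2 show ?thesis
      by (simp add: line_side_def)
  qed
qed

lemma convex_hulls_over_quadrant_boundary_meet_at:
  fixes P :: "real \<times> real"
  assumes "0 < x1" "x1 < x2" and P: "P \<in> quadrant_boundary" "snd P < t"
    and A: "\<And>z. z \<in> A \<Longrightarrow> z \<in> quadrant_boundary \<and> snd z \<le> t \<and> fst z - snd z \<le> fst P - snd P"
    and B: "\<And>z. z \<in> B \<Longrightarrow> z \<in> quadrant_boundary \<and> fst P - snd P \<le> fst z - snd z"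
  shows "convex hull (insert (x1, t) A) \<inter> convex hull (insert (x2, t) B) \<subseteq> {P}"
proof (rule convex_hulls_separated_by_line)
  define m where "m = (x1 + x2) / 2"
  have "0 < m" "x1 < m" "m < x2"
    using assms by (simp_all add: m_def)
  obtain p q where P_eq: "P = (p, q)"
    by fastforce
  have apex: "line_side P (m, t) (x, t) = (t - q) * (m - x)" for x
    by (simp add: line_side_def P_eq algebra_simps)
  show "insert (x1, t) A \<subseteq> insert P {z. 0 < line_side P (m, t) z}"
    using apex[of x1] \<open>x1 < m\<close> P A line_side_quadrant_boundary_before[of p q t m] \<open>0 < m\<close>
    by (auto simp: P_eq)
  show "insert (x2, t) B \<subseteq> insert P {z. line_side P (m, t) z < 0}"
    using apex[of x2] \<open>m < x2\<close> P B line_side_quadrant_boundary_after[of p q t m] \<open>0 < m\<close>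
    by (auto simp: P_eq mult_pos_neg)
qed

section \<open>Characteristic triangles\<close>

text \<open>The vertices of \<open>\<Delta>(x, t)\<close> other than the apex \<open>(x, t)\<close>, for \<open>x > 0\<close>; case (4) of the
  definition only concerns \<open>x = 0\<close>.\<close>

definition char_base ::
  "(real \<Rightarrow> real) \<Rightarrow> (real \<Rightarrow> real) \<Rightarrow> (real \<Rightarrow> real) \<Rightarrow> (real \<Rightarrow> real) \<Rightarrow> real \<Rightarrow> real \<Rightarrow> (real \<times> real) set"
where
  "char_base u0 ub rho0 rhob x t =
     (if Fmin u0 rho0 x t < Gmin ub rhob x t then {(y_lo u0 rho0 x t, 0), (y_hi u0 rho0 x t, 0)}
      else if Gmin ub rhob x t < Fmin u0 rho0 x t then {(0, tau_lo ub rhob x t), (0, tau_hi ub rhob x t)}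
      else {(y_hi u0 rho0 x t, 0), (0, tau_hi ub rhob x t), (0, 0)})"

lemma char_triangle_eq_hull_base:
  assumes "0 < x"
  shows "char_triangle u0 ub rho0 rhob x t = convex hull (insert (x, t) (char_base u0 ub rho0 rhob x t))"
  using assms by (simp add: char_triangle_def char_base_def Let_def)

context
  fixes u0 ub rho0 rhob :: "real \<Rightarrow> real"
  assumes standing: "standing_assms u0 ub rho0 rhob"
begin

lemma locally_bounded_measurable_data:
  shows "locally_bounded_measurable u0" "locally_bounded_measurable ub"
    and "locally_bounded_measurable rho0" "locally_bounded_measurable rhob"
proof -
  have restrict: "f \<in> borel_measurable (restrict_space borel {0..})"
    if "set_borel_measurable borel {0..} f" for f :: "real \<Rightarrow> real"
    using that by (simp add: set_borel_measurable_def borel_measurable_restrict_space_iff)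
  have locally: "\<forall>c. bounded (f ` {0..c})"
    if "\<forall>c\<ge>0. bounded (f ` {0..c})" for f :: "real \<Rightarrow> real"
  proof
    fix c :: real
    show "bounded (f ` {0..c})"
      using that by (cases "0 \<le> c") auto
  qed
  have globally: "\<forall>c. bounded (f ` {0..c})"
    if "bounded (f ` {0..})" for f :: "real \<Rightarrow> real"
  proof
    fix c :: real
    show "bounded (f ` {0..c})"
      by (rule bounded_subset[OF that]) auto
  qed
  from standing have
    "set_borel_measurable borel {0..} u0" "bounded (u0 ` {0..})"
    "set_borel_measurable borel {0..} ub" "bounded (ub ` {0..})"
    "set_borel_measurable borel {0..} rho0" "\<forall>c\<ge>0. bounded (rho0 ` {0..c})"
    "set_borel_measurable borel {0..} rhob" "\<forall>c\<ge>0. bounded (rhob ` {0..c})"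
    unfolding standing_assms_def by simp_all
  then show "locally_bounded_measurable u0" "locally_bounded_measurable ub"
    "locally_bounded_measurable rho0" "locally_bounded_measurable rhob"
    unfolding locally_bounded_measurable_def by (simp_all add: restrict globally locally)
qed

lemma data_pos:
  assumes "0 \<le> \<eta>"
  shows "0 < ub \<eta>" "0 < rho0 \<eta>" "0 < rhob \<eta>"
  using standing assms by (auto simp: standing_assms_def)

lemma locally_bounded_measurable_Fyxt_integrand:
  "locally_bounded_measurable (\<lambda>\<eta>. (t * u0 \<eta> + \<eta> - x) * rho0 \<eta>)"
  by (intro locally_bounded_measurable_mult locally_bounded_measurable_diff
      locally_bounded_measurable_add locally_bounded_measurable_const
      locally_bounded_measurable_ident locally_bounded_measurable_data)

lemma locally_bounded_measurable_Gtxt_integrand: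
  "locally_bounded_measurable (\<lambda>\<eta>. (x - ub \<eta> * (t - \<eta>)) * rhob \<eta> * ub \<eta>)"
  by (intro locally_bounded_measurable_mult locally_bounded_measurable_diff
      locally_bounded_measurable_const locally_bounded_measurable_ident locally_bounded_measurable_data)

lemma Fyxt_integrand_pos_eventually:
  assumes "0 \<le> t"
  obtains K where "0 \<le> K" "\<And>\<eta>. K < \<eta> \<Longrightarrow> 0 < (t * u0 \<eta> + \<eta> - x) * rho0 \<eta>"
proof -
  obtain B where B: "\<And>\<eta>. 0 \<le> \<eta> \<Longrightarrow> \<bar>u0 \<eta>\<bar> \<le> B"
    using standing by (auto simp: standing_assms_def bounded_real)
  have "0 < (t * u0 \<eta> + \<eta> - x) * rho0 \<eta>" if "max 0 (x + t * B) < \<eta>" for \<eta>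
  proof -
    have "0 \<le> \<eta>" "x + t * B < \<eta>"
      using that by auto
    moreover have "t * (- B) \<le> t * u0 \<eta>"
      using B[of \<eta>] \<open>0 \<le> \<eta>\<close> \<open>0 \<le> t\<close> by (intro mult_left_mono) auto
    ultimately show ?thesis
      using data_pos(2)[of \<eta>] by simp
  qed
  then show thesis
    using that[of "max 0 (x + t * B)"] by simp
qed

lemma Gtxt_integrand_pos_eventually:
  assumes "0 < t" "0 < x"
  obtains K where "0 \<le> K" "K < t" "\<And>\<eta>. K < \<eta> \<Longrightarrow> 0 < (x - ub \<eta> * (t - \<eta>)) * rhob \<eta> * ub \<eta>"
proof -
  obtain B where B: "\<And>\<eta>. 0 \<le> \<eta> \<Longrightarrow> \<bar>ub \<eta>\<bar> \<le> B"
    using standing by (auto simp: standing_assms_def bounded_real)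
  have "0 \<le> B"
    using B[of 0] by simp
  define K where "K = max 0 (t - x / (B + 1))"
  have "0 \<le> K" "K < t"
    using assms \<open>0 \<le> B\<close> by (auto simp: K_def)
  moreover have "0 < (x - ub \<eta> * (t - \<eta>)) * rhob \<eta> * ub \<eta>" if "K < \<eta>" for \<eta>
  proof -
    have "0 \<le> \<eta>" "t - x / (B + 1) < \<eta>"
      using that by (auto simp: K_def)
    have "ub \<eta> * (t - \<eta>) < x"
    proof (cases "\<eta> < t")
      case True
      have "ub \<eta> * (t - \<eta>) \<le> B * (x / (B + 1))"
        using B[of \<eta>] \<open>0 \<le> \<eta>\<close> \<open>0 \<le> B\<close> True \<open>t - x / (B + 1) < \<eta>\<close>
        by (intro mult_mono) auto
      also have "\<dots> < x"
        using \<open>0 \<le> B\<close> \<open>0 < x\<close> by (simp add: field_simps)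
      finally show ?thesis .
    next
      case False
      then have "ub \<eta> * (t - \<eta>) \<le> 0"
        using data_pos(1)[OF \<open>0 \<le> \<eta>\<close>] by (intro mult_nonneg_nonpos) auto
      with \<open>0 < x\<close> show ?thesis
        by linarith
    qed
    then show ?thesis
      using data_pos[OF \<open>0 \<le> \<eta>\<close>] by simp
  qed
  ultimately show thesis
    by (rule that)
qed

lemma Fmin_attained:
  assumes "0 \<le> t"
  shows "Fargmin u0 rho0 x t \<noteq> {}" and "\<exists>K. Fargmin u0 rho0 x t \<subseteq> {0..K}"
    and "\<And>y. 0 \<le> y \<Longrightarrow> Fmin u0 rho0 x t \<le> Fyxt u0 rho0 y x t"
proof -
  obtain K where "0 \<le> K" "\<And>\<eta>. K < \<eta> \<Longrightarrow> 0 < (t * u0 \<eta> + \<eta> - x) * rho0 \<eta>"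
    using Fyxt_integrand_pos_eventually[OF assms] by blast
  note attained = set_integral_Icc_INF_attained[OF locally_bounded_measurable_Fyxt_integrand this]
  show "Fargmin u0 rho0 x t \<noteq> {}" "\<exists>K. Fargmin u0 rho0 x t \<subseteq> {0..K}"
    "\<And>y. 0 \<le> y \<Longrightarrow> Fmin u0 rho0 x t \<le> Fyxt u0 rho0 y x t"
    using attained unfolding Fargmin_def Fmin_def Fyxt_def by blast+
qed

lemma Gmin_attained:
  assumes "0 < t" "0 < x"
  shows "Gargmin ub rhob x t \<noteq> {}" and "\<exists>K<t. Gargmin ub rhob x t \<subseteq> {0..K}"
    and "\<And>\<tau>. 0 \<le> \<tau> \<Longrightarrow> Gmin ub rhob x t \<le> Gtxt ub rhob \<tau> x t"
proof -
  obtain K where "K < t" and K: "0 \<le> K" "\<And>\<eta>. K < \<eta> \<Longrightarrow> 0 < (x - ub \<eta> * (t - \<eta>)) * rhob \<eta> * ub \<eta>"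
    using Gtxt_integrand_pos_eventually[OF assms] by blast
  note attained = set_integral_Icc_INF_attained[OF locally_bounded_measurable_Gtxt_integrand K]
  show "Gargmin ub rhob x t \<noteq> {}" "\<And>\<tau>. 0 \<le> \<tau> \<Longrightarrow> Gmin ub rhob x t \<le> Gtxt ub rhob \<tau> x t"
    using attained unfolding Gargmin_def Gmin_def Gtxt_def by blast+
  show "\<exists>K<t. Gargmin ub rhob x t \<subseteq> {0..K}"
    using attained(2) \<open>K < t\<close> unfolding Gargmin_def Gmin_def Gtxt_def by blast
qed

lemma Fyxt_shift:
  "Fyxt u0 rho0 y x' t = Fyxt u0 rho0 y x t - (x' - x) * (LINT \<eta>:{0..y}|lborel. rho0 \<eta>)"
proof -
  have "set_integrable lborel {0..y} (\<lambda>\<eta>. (t * u0 \<eta> + \<eta> - x) * rho0 \<eta>)"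
    "set_integrable lborel {0..y} (\<lambda>\<eta>. (x' - x) * rho0 \<eta>)"
    by (intro set_integrable_mult_right locally_bounded_measurable_set_integrable_Icc
        locally_bounded_measurable_Fyxt_integrand locally_bounded_measurable_data)+
  moreover have "Fyxt u0 rho0 y x' t
      = (LINT \<eta>:{0..y}|lborel. (t * u0 \<eta> + \<eta> - x) * rho0 \<eta> - (x' - x) * rho0 \<eta>)"
    unfolding Fyxt_def by (rule set_lebesgue_integral_cong) (auto simp: algebra_simps)
  ultimately show ?thesis
    by (simp add: Fyxt_def)
qed

lemma Gtxt_shift:
  "Gtxt ub rhob \<tau> x' t = Gtxt ub rhob \<tau> x t + (x' - x) * (LINT \<eta>:{0..\<tau>}|lborel. rhob \<eta> * ub \<eta>)"
proof -
  have "set_integrable lborel {0..\<tau>} (\<lambda>\<eta>. (x - ub \<eta> * (t - \<eta>)) * rhob \<eta> * ub \<eta>)"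
    "set_integrable lborel {0..\<tau>} (\<lambda>\<eta>. (x' - x) * (rhob \<eta> * ub \<eta>))"
    by (intro set_integrable_mult_right locally_bounded_measurable_set_integrable_Icc
        locally_bounded_measurable_Gtxt_integrand locally_bounded_measurable_mult
        locally_bounded_measurable_data)+
  moreover have "Gtxt ub rhob \<tau> x' t
      = (LINT \<eta>:{0..\<tau>}|lborel. (x - ub \<eta> * (t - \<eta>)) * rhob \<eta> * ub \<eta> + (x' - x) * (rhob \<eta> * ub \<eta>))"
    unfolding Gtxt_def by (rule set_lebesgue_integral_cong) (auto simp: algebra_simps)
  ultimately show ?thesis
    by (simp add: Gtxt_def)
qed

lemma strict_mono_on_rho0_integral: "strict_mono_on {0..} (\<lambda>y. LINT \<eta>:{0..y}|lborel. rho0 \<eta>)"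
  using locally_bounded_measurable_data(3) data_pos(2) by (rule strict_mono_on_set_integral_Icc)

lemma strict_mono_on_flux_integral: "strict_mono_on {0..} (\<lambda>\<tau>. LINT \<eta>:{0..\<tau>}|lborel. rhob \<eta> * ub \<eta>)"
  using locally_bounded_measurable_mult[OF locally_bounded_measurable_data(4,2)] data_pos(3,1)
  by (intro strict_mono_on_set_integral_Icc) auto

lemma Fargmin_mono:
  assumes "0 \<le> t" "x1 < x2" "y1 \<in> Fargmin u0 rho0 x1 t" "y2 \<in> Fargmin u0 rho0 x2 t"
  shows "y1 \<le> y2"
proof (rule minimiser_mono)
  show "Fyxt u0 rho0 y x2 t = Fyxt u0 rho0 y x1 t - (x2 - x1) * (LINT \<eta>:{0..y}|lborel. rho0 \<eta>)" for y
    by (rule Fyxt_shift)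
qed (use assms Fmin_attained(3)[OF \<open>0 \<le> t\<close>] strict_mono_on_rho0_integral in \<open>auto simp: Fargmin_def\<close>)

lemma Gargmin_antimono:
  assumes "0 < t" "0 < x1" "x1 < x2" "\<tau>1 \<in> Gargmin ub rhob x1 t" "\<tau>2 \<in> Gargmin ub rhob x2 t"
  shows "\<tau>2 \<le> \<tau>1"
proof (rule minimiser_mono)
  show "Gtxt ub rhob \<tau> x1 t = Gtxt ub rhob \<tau> x2 t - (x2 - x1) * (LINT \<eta>:{0..\<tau>}|lborel. rhob \<eta> * ub \<eta>)" for \<tau>
    using Gtxt_shift[of \<tau> x2 t x1] by simp
qed (use assms Gmin_attained(3)[OF \<open>0 < t\<close>] strict_mono_on_flux_integral in \<open>auto simp: Gargmin_def\<close>)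

lemma y_lo_y_hi_bounds:
  assumes "0 \<le> t"
  shows "0 \<le> y_lo u0 rho0 x t" "y_lo u0 rho0 x t \<le> y_hi u0 rho0 x t" "0 \<le> y_hi u0 rho0 x t"
proof -
  obtain K where K: "Fargmin u0 rho0 x t \<subseteq> {0..K}"
    using Fmin_attained(2)[OF assms] by blast
  note bounds = Sup_Inf_bounds[OF Fmin_attained(1)[OF assms] K]
  show "0 \<le> y_lo u0 rho0 x t" "y_lo u0 rho0 x t \<le> y_hi u0 rho0 x t"
    unfolding y_lo_def y_hi_def by (fact bounds(1), fact bounds(2))
  then show "0 \<le> y_hi u0 rho0 x t"
    by linarith
qed

lemma tau_lo_tau_hi_bounds:
  assumes "0 < t" "0 < x"
  shows "0 \<le> tau_lo ub rhob x t" "tau_lo ub rhob x t \<le> tau_hi ub rhob x t" "tau_hi ub rhob x t < t"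
    and "0 \<le> tau_hi ub rhob x t"
proof -
  obtain K where "K < t" and K: "Gargmin ub rhob x t \<subseteq> {0..K}"
    using Gmin_attained(2)[OF assms] by blast
  note bounds = Sup_Inf_bounds[OF Gmin_attained(1)[OF assms] K]
  show "0 \<le> tau_lo ub rhob x t" "tau_lo ub rhob x t \<le> tau_hi ub rhob x t"
    unfolding tau_lo_def tau_hi_def by (fact bounds(1), fact bounds(2))
  then show "0 \<le> tau_hi ub rhob x t"
    by linarith
  show "tau_hi ub rhob x t < t"
    unfolding tau_hi_def using bounds(3) \<open>K < t\<close> by linarith
qed

lemma y_hi_le_y_lo:
  assumes "0 \<le> t" "x1 < x2"
  shows "y_hi u0 rho0 x1 t \<le> y_lo u0 rho0 x2 t"
  unfolding y_lo_def y_hi_def using Fmin_attained(1)[OF \<open>0 \<le> t\<close>] Fargmin_mono[OF assms]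
  by (intro cInf_greatest cSup_least) auto

lemma tau_hi_le_tau_lo:
  assumes "0 < t" "0 < x1" "x1 < x2"
  shows "tau_hi ub rhob x2 t \<le> tau_lo ub rhob x1 t"
  using Gmin_attained(1)[OF \<open>0 < t\<close>] assms Gargmin_antimono[OF assms]
  unfolding tau_lo_def tau_hi_def by (intro cInf_greatest cSup_least) auto

lemma Fmin_Gmin_gap:
  assumes "0 < t" "0 < x1" "x1 < x2"
    and "y \<in> Fargmin u0 rho0 x1 t" "\<tau> \<in> Gargmin ub rhob x2 t"
  shows "Fmin u0 rho0 x2 t - Gmin ub rhob x2 t
      + (x2 - x1) * ((LINT \<eta>:{0..y}|lborel. rho0 \<eta>) + (LINT \<eta>:{0..\<tau>}|lborel. rhob \<eta> * ub \<eta>))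
    \<le> Fmin u0 rho0 x1 t - Gmin ub rhob x1 t"
proof -
  have "Fmin u0 rho0 x2 t \<le> Fyxt u0 rho0 y x2 t"
    using assms by (intro Fmin_attained(3)) (auto simp: Fargmin_def)
  also have "\<dots> = Fmin u0 rho0 x1 t - (x2 - x1) * (LINT \<eta>:{0..y}|lborel. rho0 \<eta>)"
    using assms(4) by (simp add: Fyxt_shift[of y x2 t x1] Fargmin_def)
  finally have F: "Fmin u0 rho0 x2 t + (x2 - x1) * (LINT \<eta>:{0..y}|lborel. rho0 \<eta>) \<le> Fmin u0 rho0 x1 t"
    by simp
  have "Gmin ub rhob x1 t \<le> Gtxt ub rhob \<tau> x1 t"
    using assms by (intro Gmin_attained(3)) (auto simp: Gargmin_def)
  also have "\<dots> = Gmin ub rhob x2 t - (x2 - x1) * (LINT \<eta>:{0..\<tau>}|lborel. rhob \<eta> * ub \<eta>)"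
    using assms(5) Gtxt_shift[of \<tau> x2 t x1] by (simp add: Gargmin_def)
  finally show ?thesis
    using F by (simp add: algebra_simps)
qed

lemma rho0_integral_nonneg: "0 \<le> (LINT \<eta>:{0..y}|lborel. rho0 \<eta>)"
  using data_pos(2) by (intro set_integral_nonneg) (auto intro: less_imp_le)

lemma flux_integral_nonneg: "0 \<le> (LINT \<eta>:{0..\<tau>}|lborel. rhob \<eta> * ub \<eta>)"
  using data_pos(1,3) by (intro set_integral_nonneg) (auto intro: less_imp_le)

lemma Fmin_minus_Gmin_antimono:
  assumes "0 < t" "0 < x1" "x1 < x2"
  shows "Fmin u0 rho0 x2 t - Gmin ub rhob x2 t \<le> Fmin u0 rho0 x1 t - Gmin ub rhob x1 t"
proof -
  obtain y where "y \<in> Fargmin u0 rho0 x1 t"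
    using Fmin_attained(1)[of t x1] assms by auto
  moreover obtain \<tau> where "\<tau> \<in> Gargmin ub rhob x2 t"
    using Gmin_attained(1)[of t x2] assms by auto
  ultimately have "Fmin u0 rho0 x2 t - Gmin ub rhob x2 t
      + (x2 - x1) * ((LINT \<eta>:{0..y}|lborel. rho0 \<eta>) + (LINT \<eta>:{0..\<tau>}|lborel. rhob \<eta> * ub \<eta>))
    \<le> Fmin u0 rho0 x1 t - Gmin ub rhob x1 t"
    using assms by (rule Fmin_Gmin_gap[rotated 3])
  moreover have "0 \<le> (x2 - x1) * ((LINT \<eta>:{0..y}|lborel. rho0 \<eta>) + (LINT \<eta>:{0..\<tau>}|lborel. rhob \<eta> * ub \<eta>))"
    using assms rho0_integral_nonneg flux_integral_nonneg by simp
  ultimately show ?thesis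
    by linarith
qed

lemma y_hi_tau_hi_zero_if_Fmin_eq_Gmin:
  assumes "0 < t" "0 < x1" "x1 < x2"
    and "Fmin u0 rho0 x1 t = Gmin ub rhob x1 t" "Fmin u0 rho0 x2 t = Gmin ub rhob x2 t"
  shows "y_hi u0 rho0 x1 t = 0" "tau_hi ub rhob x2 t = 0"
proof -
  have zero: "y = 0 \<and> \<tau> = 0" if "y \<in> Fargmin u0 rho0 x1 t" "\<tau> \<in> Gargmin ub rhob x2 t" for y \<tau>
  proof -
    have "(x2 - x1) * ((LINT \<eta>:{0..y}|lborel. rho0 \<eta>) + (LINT \<eta>:{0..\<tau>}|lborel. rhob \<eta> * ub \<eta>)) \<le> 0"
      using Fmin_Gmin_gap[OF assms(1-3) that] assms(4,5) by simp
    then have "(LINT \<eta>:{0..y}|lborel. rho0 \<eta>) + (LINT \<eta>:{0..\<tau>}|lborel. rhob \<eta> * ub \<eta>) \<le> 0"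
      using \<open>x1 < x2\<close> by (simp add: mult_le_0_iff)
    then have "\<not> 0 < (LINT \<eta>:{0..y}|lborel. rho0 \<eta>)" "\<not> 0 < (LINT \<eta>:{0..\<tau>}|lborel. rhob \<eta> * ub \<eta>)"
      using rho0_integral_nonneg[of y] flux_integral_nonneg[of \<tau>] by linarith+
    then have "\<not> 0 < y" "\<not> 0 < \<tau>"
      using set_integral_Icc_pos[OF locally_bounded_measurable_data(3) data_pos(2)]
        set_integral_Icc_pos[OF locally_bounded_measurable_mult[OF locally_bounded_measurable_data(4,2)]]
        data_pos(1,3) by auto
    moreover have "0 \<le> y" "0 \<le> \<tau>"
      using that by (auto simp: Fargmin_def Gargmin_def)
    ultimately show ?thesis
      by linarith
  qed
  obtain y where y: "y \<in> Fargmin u0 rho0 x1 t"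
    using Fmin_attained(1)[of t x1] assms by auto
  obtain \<tau> where \<tau>: "\<tau> \<in> Gargmin ub rhob x2 t"
    using Gmin_attained(1)[of t x2] assms by auto
  have "Fargmin u0 rho0 x1 t = {0}"
    using zero[OF _ \<tau>] y by blast
  then show "y_hi u0 rho0 x1 t = 0"
    by (simp add: y_hi_def)
  have "Gargmin ub rhob x2 t = {0}"
    using zero[OF y] \<tau> by blast
  then show "tau_hi ub rhob x2 t = 0"
    by (simp add: tau_hi_def)
qed

lemma char_base_subset_quadrant_boundary:
  assumes "0 < t" "0 < x" "z \<in> char_base u0 ub rho0 rhob x t"
  shows "z \<in> quadrant_boundary" "snd z < t"
proof -
  have "0 \<le> y_lo u0 rho0 x t" "y_lo u0 rho0 x t \<le> y_hi u0 rho0 x t"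
    using y_lo_y_hi_bounds assms(1) by simp_all
  moreover have "0 \<le> tau_lo ub rhob x t" "tau_lo ub rhob x t \<le> tau_hi ub rhob x t" "tau_hi ub rhob x t < t"
    using tau_lo_tau_hi_bounds assms(1,2) by simp_all
  ultimately show "z \<in> quadrant_boundary" "snd z < t"
    using assms(1,3) unfolding char_base_def quadrant_boundary_def by (auto split: if_splits)
qed

lemma char_base_before_y_hi:
  assumes "0 < t" "0 < x" "Fmin u0 rho0 x t \<le> Gmin ub rhob x t"
    and "z \<in> char_base u0 ub rho0 rhob x t"
  shows "fst z - snd z \<le> y_hi u0 rho0 x t"
proof -
  have "0 \<le> y_lo u0 rho0 x t" "y_lo u0 rho0 x t \<le> y_hi u0 rho0 x t" "0 \<le> tau_hi ub rhob x t"
    using y_lo_y_hi_bounds tau_lo_tau_hi_bounds assms(1,2) by simp_all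
  with assms(3,4) show ?thesis
    unfolding char_base_def by (auto split: if_splits)
qed

lemma char_base_after_y_hi:
  assumes "0 < t" "0 < x1" "x1 < x2" "Fmin u0 rho0 x1 t \<le> Gmin ub rhob x1 t"
    and "z \<in> char_base u0 ub rho0 rhob x2 t"
  shows "y_hi u0 rho0 x1 t \<le> fst z - snd z"
proof (cases "Fmin u0 rho0 x2 t < Gmin ub rhob x2 t")
  case True
  have "y_hi u0 rho0 x1 t \<le> y_lo u0 rho0 x2 t" "y_lo u0 rho0 x2 t \<le> y_hi u0 rho0 x2 t"
    using y_hi_le_y_lo y_lo_y_hi_bounds assms(1,3) by simp_all
  with True assms(5) show ?thesis
    unfolding char_base_def by auto
next
  case False
  then have "Fmin u0 rho0 x1 t = Gmin ub rhob x1 t" "Fmin u0 rho0 x2 t = Gmin ub rhob x2 t"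
    using Fmin_minus_Gmin_antimono[OF assms(1-3)] assms(4) by linarith+
  moreover note y_hi_tau_hi_zero_if_Fmin_eq_Gmin[OF assms(1-3) this]
  moreover have "0 \<le> y_hi u0 rho0 x2 t"
    using y_lo_y_hi_bounds assms(1) by simp
  ultimately show ?thesis
    using assms(5) unfolding char_base_def by auto
qed

lemma char_base_before_tau_lo:
  assumes "0 < t" "0 < x" "Gmin ub rhob x t < Fmin u0 rho0 x t"
    and "z \<in> char_base u0 ub rho0 rhob x t"
  shows "fst z - snd z \<le> - tau_lo ub rhob x t"
  using assms tau_lo_tau_hi_bounds(2)[OF assms(1,2)] unfolding char_base_def by auto

lemma char_base_after_tau_lo:
  assumes "0 < t" "0 < x1" "x1 < x2" "z \<in> char_base u0 ub rho0 rhob x2 t"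
  shows "- tau_lo ub rhob x1 t \<le> fst z - snd z"
proof -
  have "0 \<le> tau_lo ub rhob x1 t" "0 \<le> y_lo u0 rho0 x2 t" "y_lo u0 rho0 x2 t \<le> y_hi u0 rho0 x2 t"
    "tau_lo ub rhob x2 t \<le> tau_hi ub rhob x2 t" "tau_hi ub rhob x2 t \<le> tau_lo ub rhob x1 t"
    using assms(1-3) tau_lo_tau_hi_bounds y_lo_y_hi_bounds tau_hi_le_tau_lo by simp_all
  with assms(4) show ?thesis
    unfolding char_base_def by (auto split: if_splits)
qed

lemma char_bases_separated:
  assumes "0 < t" "0 < x1" "x1 < x2"
  obtains P where "P \<in> quadrant_boundary" "snd P < t"
    "\<And>z. z \<in> char_base u0 ub rho0 rhob x1 t \<Longrightarrow> fst z - snd z \<le> fst P - snd P"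
    "\<And>z. z \<in> char_base u0 ub rho0 rhob x2 t \<Longrightarrow> fst P - snd P \<le> fst z - snd z"
proof (cases "Fmin u0 rho0 x1 t \<le> Gmin ub rhob x1 t")
  case True
  have "(y_hi u0 rho0 x1 t, 0) \<in> quadrant_boundary"
    using y_lo_y_hi_bounds assms(1) by (simp add: quadrant_boundary_def)
  with char_base_before_y_hi[OF assms(1,2) True] char_base_after_y_hi[OF assms True] \<open>0 < t\<close>
  show thesis
    by (intro that[of "(y_hi u0 rho0 x1 t, 0)"]) auto
next
  case False
  have "(0, tau_lo ub rhob x1 t) \<in> quadrant_boundary" "tau_lo ub rhob x1 t < t"
    using tau_lo_tau_hi_bounds[OF assms(1,2)] by (auto simp: quadrant_boundary_def)
  moreover have "Gmin ub rhob x1 t < Fmin u0 rho0 x1 t"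
    using False by simp
  ultimately show thesis
    using char_base_before_tau_lo[OF assms(1,2)] char_base_after_tau_lo[OF assms]
    by (intro that[of "(0, tau_lo ub rhob x1 t)"]) auto
qed

lemma char_triangles_disjoint_if_less:
  assumes "0 < t" "0 < x1" "x1 < x2"
  shows "char_triangle u0 ub rho0 rhob x1 t \<inter> char_triangle u0 ub rho0 rhob x2 t
           \<inter> ({0<..} \<times> {0<..}) = {}"
proof -
  obtain P where P: "P \<in> quadrant_boundary" "snd P < t"
    "\<And>z. z \<in> char_base u0 ub rho0 rhob x1 t \<Longrightarrow> fst z - snd z \<le> fst P - snd P"
    "\<And>z. z \<in> char_base u0 ub rho0 rhob x2 t \<Longrightarrow> fst P - snd P \<le> fst z - snd z"
    using char_bases_separated[OF assms] by blast
  have "0 < x2"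
    using assms by simp
  have "char_triangle u0 ub rho0 rhob x1 t \<inter> char_triangle u0 ub rho0 rhob x2 t \<subseteq> {P}"
    unfolding char_triangle_eq_hull_base[OF \<open>0 < x1\<close>] char_triangle_eq_hull_base[OF \<open>0 < x2\<close>]
  proof (rule convex_hulls_over_quadrant_boundary_meet_at)
    show "z \<in> quadrant_boundary \<and> snd z \<le> t \<and> fst z - snd z \<le> fst P - snd P"
      if "z \<in> char_base u0 ub rho0 rhob x1 t" for z
      using char_base_subset_quadrant_boundary[OF assms(1,2) that] P(3)[OF that] by simp
    show "z \<in> quadrant_boundary \<and> fst P - snd P \<le> fst z - snd z"
      if "z \<in> char_base u0 ub rho0 rhob x2 t" for z
      using char_base_subset_quadrant_boundary[OF assms(1) \<open>0 < x2\<close> that] P(4)[OF that] by simp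
  qed (use assms P in auto)
  moreover have "P \<notin> {0<..} \<times> {0<..}"
    using P(1) by (auto simp: quadrant_boundary_def)
  ultimately show ?thesis
    by blast
qed

end

theorem lemma2p9:
  fixes u0 ub rho0 rhob :: "real \<Rightarrow> real" and t x1 x2 :: real
  assumes "standing_assms u0 ub rho0 rhob"
    and "t > 0" and "x1 > 0" and "x2 > 0" and "x1 \<noteq> x2"
  shows "char_triangle u0 ub rho0 rhob x1 t \<inter> char_triangle u0 ub rho0 rhob x2 t
           \<inter> ({0<..} \<times> {0<..}) = {}"
proof (cases "x1 < x2")
  case True
  with assms show ?thesis
    by (intro char_triangles_disjoint_if_less)
next
  case False
  with \<open>x1 \<noteq> x2\<close> have "x2 < x1"
    by simp
  with assms have "char_triangle u0 ub rho0 rhob x2 t \<inter> char_triangle u0 ub rho0 rhob x1 t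
      \<inter> ({0<..} \<times> {0<..}) = {}"
    by (intro char_triangles_disjoint_if_less)
  then show ?thesis
    by (simp add: Int_commute)
qed

end
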